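(* Let $\delta\in(0,1)$ and let $S \subset [p]$ with $|S| = s$ satisfy $M(S) := |S \triangle S^\star|/2 \ge \delta s$, where $S^\star = \operatorname{supp}(\beta^\star)$. Let $\Delta(S) := \|\Sigma^{-1}(Y - X\mathbb{1}_S)\|_2^2 - \|\Sigma^{-1}(Y - X\mathbb{1}_{S^\star})\|_2^2$. Then $$ \mathbb{P}(\Delta(S) \le 0) \le \left(1 + \frac{\delta s}{2\sigma_1^2}\right)^{-n_1/2}\left(1 + \frac{\delta s}{2\sigma_2^2}\right)^{-n_2/2}. $$
   Context: Sample sizes $n_1,n_2\ge1$, $n = n_1+n_2$. $X\in\mathbb{R}^{n\times p}$ has i.i.d. $\mathcal{N}(0,1)$ entries; $0<\sigma_1^2<\sigma_2^2$; $\Sigma = \begin{pmatrix} \sigma_1 I_{n_1} & 0 \\ 0 & \sigma_2 I_{n_2}\end{pmatrix}$; $W\sim\mathcal{N}(0,I_n)$ independent of $X$; $Z = \Sigma W$; $Y = X\beta^\star + Z$ with $\beta^\star\in\{0,1\}^p$ deterministic having exactly $s$ ones. For $S\subset[p]$, $\mathbb{1}_S\in\{0,1\}^p$ is the indicator vector of $S$. $A\triangle B = (A\cup B)\setminus(A\cap B)$. *)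

theory Defs
  imports "HOL-Probability.Probability"
begin

text \<open>Diagonal entries of Sigma: sigma1 on rows i < n1, sigma2 on rows n1 <= i < n1+n2.\<close>
definition sig :: "nat \<Rightarrow> real \<Rightarrow> real \<Rightarrow> nat \<Rightarrow> real" where
  "sig n1 \<sigma>1 \<sigma>2 i = (if i < n1 then \<sigma>1 else \<sigma>2)"

text \<open>Response Y = X beta_star + Sigma W, with beta_star the indicator of Sstar.\<close>
definition resp :: "nat \<Rightarrow> real \<Rightarrow> real \<Rightarrow> nat \<Rightarrow> nat set \<Rightarrow>
    (nat \<Rightarrow> nat \<Rightarrow> real) \<Rightarrow> (nat \<Rightarrow> real) \<Rightarrow> nat \<Rightarrow> real" where
  "resp n1 \<sigma>1 \<sigma>2 p Sstar x w i =
     (\<Sum>j<p. x i j * indicator Sstar j) + sig n1 \<sigma>1 \<sigma>2 i * w i"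

definition wres :: "nat \<Rightarrow> nat \<Rightarrow> real \<Rightarrow> real \<Rightarrow> nat \<Rightarrow>
    (nat \<Rightarrow> nat \<Rightarrow> real) \<Rightarrow> (nat \<Rightarrow> real) \<Rightarrow> nat set \<Rightarrow> real" where
  "wres n n1 \<sigma>1 \<sigma>2 p x y S =
     (\<Sum>i<n. (inverse (sig n1 \<sigma>1 \<sigma>2 i) * (y i - (\<Sum>j<p. x i j * indicator S j)))\<^sup>2)"

end

theory Submission
  imports Defs
begin

(* Expanding the squares, Delta(S) = sum_i D_i with D_i = (G_i / sigma_i + W_i)^2 - W_i^2 and
   G_i = sum_j X_ij (1_Sstar - 1_S)_j.  Each G_i is a centred Gaussian of variance
   K = |S triangle Sstar| >= 2 delta s, independent of W_i, and the rows are independent.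
   Chernoff's bound with parameter 1/4 gives P(Delta(S) <= 0) <= prod_i E exp(-D_i / 4), and
   integrating out first W_i (a linear exponent) and then G_i (a quadratic one) turns each
   factor into (1 + K / (4 sigma_i^2))^(-1/2). *)

lemma nn_integral_std_normal_exp_linear:
  "(\<integral>\<^sup>+w. ennreal (std_normal_density w * exp (- b * w)) \<partial>lborel) = ennreal (exp (b\<^sup>2 / 2))"
proof -
  have "std_normal_density w * exp (- b * w) = exp (b\<^sup>2 / 2) * normal_density (- b) 1 w" for w
    by (simp add: normal_density_def mult_exp_exp power2_eq_square field_simps)
  then have "(\<integral>\<^sup>+w. ennreal (std_normal_density w * exp (- b * w)) \<partial>lborel)
      = ennreal (exp (b\<^sup>2 / 2)) * (\<integral>\<^sup>+w. ennreal (normal_density (- b) 1 w) \<partial>lborel)"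
    by (simp add: ennreal_mult nn_integral_cmult)
  also have "(\<integral>\<^sup>+w. ennreal (normal_density (- b) 1 w) \<partial>lborel) = 1"
    by (subst nn_integral_eq_integral) auto
  finally show ?thesis by simp
qed

lemma nn_integral_normal_exp_square:
  assumes "0 < \<tau>" "0 \<le> c"
  shows "(\<integral>\<^sup>+g. ennreal (normal_density 0 \<tau> g * exp (- c * g\<^sup>2)) \<partial>lborel)
    = ennreal (1 / sqrt (1 + 2 * c * \<tau>\<^sup>2))"
proof -
  define q where "q = 1 + 2 * c * \<tau>\<^sup>2"
  have q: "0 < q" using assms by (simp add: q_def add_pos_nonneg)
  define t where "t = \<tau> / sqrt q"
  have t: "0 < t" "t\<^sup>2 = \<tau>\<^sup>2 / q" using assms q by (simp_all add: t_def power_divide)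
  have "normal_density 0 \<tau> g * exp (- c * g\<^sup>2) = 1 / sqrt q * normal_density 0 t g" for g
  proof -
    have "exp (- (g\<^sup>2 / (2 * \<tau>\<^sup>2))) * exp (- (c * g\<^sup>2)) = exp (- (g\<^sup>2 / (2 * t\<^sup>2)))"
      unfolding mult_exp_exp using q assms by (simp add: t q_def field_simps)
    moreover have "sqrt (2 * pi * t\<^sup>2) = sqrt (2 * pi * \<tau>\<^sup>2) / sqrt q"
      using q by (simp add: t real_sqrt_divide real_sqrt_mult)
    ultimately show ?thesis
      using q by (simp add: normal_density_def)
  qed
  then have "(\<integral>\<^sup>+g. ennreal (normal_density 0 \<tau> g * exp (- c * g\<^sup>2)) \<partial>lborel)
      = (\<integral>\<^sup>+g. ennreal (1 / sqrt q) * ennreal (normal_density 0 t g) \<partial>lborel)"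
    using q by (intro nn_integral_cong) (simp add: ennreal_mult[symmetric])
  also have "\<dots> = ennreal (1 / sqrt q) * (\<integral>\<^sup>+g. ennreal (normal_density 0 t g) \<partial>lborel)"
    by (rule nn_integral_cmult) simp
  also have "(\<integral>\<^sup>+g. ennreal (normal_density 0 t g) \<partial>lborel) = 1"
    using t by (subst nn_integral_eq_integral) auto
  finally show ?thesis by (simp add: q_def)
qed

lemma (in prob_space) nn_integral_exp_shifted_square_diff:
  assumes G: "distributed M lborel G (normal_density 0 \<tau>)" "0 < \<tau>"
    and W: "distributed M lborel W std_normal_density"
    and GW: "indep_var borel G borel W"
  shows "(\<integral>\<^sup>+\<omega>. ennreal (exp (- (1 / 4) * ((a * G \<omega> + W \<omega>)\<^sup>2 - (W \<omega>)\<^sup>2))) \<partial>M)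
    = ennreal (1 / sqrt (1 + a\<^sup>2 * \<tau>\<^sup>2 / 4))"
proof -
  define F :: "real \<times> real \<Rightarrow> ennreal" where
    "F = (\<lambda>(g, w). ennreal (exp (- (1 / 4) * ((a * g + w)\<^sup>2 - w\<^sup>2))))"
  have F[measurable]: "F \<in> borel_measurable (lborel \<Otimes>\<^sub>M lborel)"
    unfolding F_def by measurable
  have "indep_var lborel G lborel W"
    using indep_var_compose[OF GW, of id lborel id lborel] by simp
  then have joint: "distributed M (lborel \<Otimes>\<^sub>M lborel) (\<lambda>\<omega>. (G \<omega>, W \<omega>))
      (\<lambda>(g, w). ennreal (normal_density 0 \<tau> g) * ennreal (std_normal_density w))"
    by (rule distributed_joint_indep[OF sigma_finite_lborel sigma_finite_lborel G(1) W])
  have "(\<integral>\<^sup>+\<omega>. ennreal (exp (- (1 / 4) * ((a * G \<omega> + W \<omega>)\<^sup>2 - (W \<omega>)\<^sup>2))) \<partial>M)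
      = (\<integral>\<^sup>+x. (\<lambda>(g, w). ennreal (normal_density 0 \<tau> g) * ennreal (std_normal_density w)) x * F x
          \<partial>(lborel \<Otimes>\<^sub>M lborel))"
    unfolding distributed_nn_integral[OF joint F] by (simp add: F_def)
  also have "\<dots> = (\<integral>\<^sup>+g. \<integral>\<^sup>+w. ennreal (normal_density 0 \<tau> g) * ennreal (std_normal_density w) * F (g, w)
          \<partial>lborel \<partial>lborel)"
    by (subst lborel.nn_integral_fst[symmetric]) (auto simp: case_prod_beta)
  also have "\<dots> = (\<integral>\<^sup>+g. ennreal (normal_density 0 \<tau> g * exp (- (a\<^sup>2 / 8) * g\<^sup>2)) \<partial>lborel)"
  proof (rule nn_integral_cong)
    fix g :: real
    have split: "ennreal (normal_density 0 \<tau> g) * ennreal (std_normal_density w) * F (g, w)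
        = ennreal (normal_density 0 \<tau> g * exp (- (a\<^sup>2 / 4) * g\<^sup>2))
          * ennreal (std_normal_density w * exp (- (a * g / 2) * w))" for w
      by (simp add: F_def ennreal_mult[symmetric] mult_exp_exp power2_eq_square field_simps)
    have "(\<integral>\<^sup>+w. ennreal (normal_density 0 \<tau> g) * ennreal (std_normal_density w) * F (g, w) \<partial>lborel)
        = ennreal (normal_density 0 \<tau> g * exp (- (a\<^sup>2 / 4) * g\<^sup>2))
          * (\<integral>\<^sup>+w. ennreal (std_normal_density w * exp (- (a * g / 2) * w)) \<partial>lborel)"
      unfolding split by (rule nn_integral_cmult) simp
    also have "\<dots> = ennreal (normal_density 0 \<tau> g * exp (- (a\<^sup>2 / 8) * g\<^sup>2))"
      unfolding nn_integral_std_normal_exp_linear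
      by (simp add: ennreal_mult[symmetric] mult_exp_exp power2_eq_square field_simps)
    finally show "(\<integral>\<^sup>+w. ennreal (normal_density 0 \<tau> g) * ennreal (std_normal_density w) * F (g, w) \<partial>lborel)
        = ennreal (normal_density 0 \<tau> g * exp (- (a\<^sup>2 / 8) * g\<^sup>2))" .
  qed
  also have "\<dots> = ennreal (1 / sqrt (1 + a\<^sup>2 * \<tau>\<^sup>2 / 4))"
    using nn_integral_normal_exp_square[OF G(2), of "a\<^sup>2 / 8"] by simp
  finally show ?thesis .
qed

lemma (in prob_space) emeasure_sum_nonpos_le_prod:
  assumes "finite I" "indep_vars (\<lambda>_. borel) D I" "0 \<le> t"
  shows "emeasure M {\<omega> \<in> space M. (\<Sum>i\<in>I. D i \<omega>) \<le> 0}
    \<le> (\<Prod>i\<in>I. \<integral>\<^sup>+\<omega>. ennreal (exp (- t * D i \<omega>)) \<partial>M)"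
proof -
  have "(\<lambda>\<omega>. \<Sum>i\<in>I. D i \<omega>) \<in> borel_measurable M"
    using assms(2) by (intro borel_measurable_sum) (auto simp: indep_vars_def)
  then have "{\<omega> \<in> space M. (\<Sum>i\<in>I. D i \<omega>) \<le> 0} \<in> sets M"
    by measurable
  then have "emeasure M {\<omega> \<in> space M. (\<Sum>i\<in>I. D i \<omega>) \<le> 0}
      = (\<integral>\<^sup>+\<omega>. indicator {\<omega> \<in> space M. (\<Sum>i\<in>I. D i \<omega>) \<le> 0} \<omega> \<partial>M)"
    by simp
  also have "\<dots> \<le> (\<integral>\<^sup>+\<omega>. ennreal (exp (- t * (\<Sum>i\<in>I. D i \<omega>))) \<partial>M)"
    using assms(3) by (intro nn_integral_mono) (auto split: split_indicator simp: mult_nonneg_nonpos)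
  also have "\<dots> = (\<integral>\<^sup>+\<omega>. (\<Prod>i\<in>I. ennreal (exp (- t * D i \<omega>))) \<partial>M)"
    using assms(1) by (simp add: sum_distrib_left exp_sum prod_ennreal)
  also have "\<dots> = (\<Prod>i\<in>I. \<integral>\<^sup>+\<omega>. ennreal (exp (- t * D i \<omega>)) \<partial>M)"
    using indep_vars_compose2[OF assms(2), of "\<lambda>_ x. ennreal (exp (- t * x))" "\<lambda>_. borel"]
    by (intro indep_vars_nn_integral assms(1)) auto
  finally show ?thesis .
qed

locale gaussian_design = prob_space +
  fixes X :: "nat \<Rightarrow> nat \<Rightarrow> 'a \<Rightarrow> real" and W :: "nat \<Rightarrow> 'a \<Rightarrow> real" and n p :: nat
  assumes indep_entries: "indep_vars (\<lambda>_. borel)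
      (\<lambda>k. case k of Inl (i, j) \<Rightarrow> X i j | Inr i \<Rightarrow> W i)
      (Inl ` ({..<n} \<times> {..<p}) \<union> Inr ` {..<n})"
    and X_std_normal: "\<And>i j. i < n \<Longrightarrow> j < p \<Longrightarrow> distributed M lborel (X i j) std_normal_density"
    and W_std_normal: "\<And>i. i < n \<Longrightarrow> distributed M lborel (W i) std_normal_density"
begin

definition linear_predictor :: "(nat \<Rightarrow> real) \<Rightarrow> nat \<Rightarrow> 'a \<Rightarrow> real" where
  "linear_predictor v i \<omega> = (\<Sum>j<p. X i j \<omega> * v j)"

lemma indep_vars_entry_blocks:
  assumes "\<And>l. l \<in> L \<Longrightarrow> K l \<subseteq> Inl ` ({..<n} \<times> {..<p}) \<union> Inr ` {..<n}"
    and "disjoint_family_on K L"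
    and "\<And>l. l \<in> L \<Longrightarrow> \<Phi> l \<in> borel_measurable (PiM (K l) (\<lambda>_. borel))"
  shows "indep_vars (\<lambda>_. borel)
    (\<lambda>l \<omega>. \<Phi> l (\<lambda>k \<in> K l. (case k of Inl (i, j) \<Rightarrow> X i j | Inr i \<Rightarrow> W i) \<omega>)) L"
  using indep_vars_compose2[OF indep_vars_restrict[OF indep_entries assms(1,2)] assms(3)] .

lemma distributed_linear_predictor:
  assumes "i < n" "\<exists>j<p. v j \<noteq> 0"
  shows "distributed M lborel (linear_predictor v i) (normal_density 0 (sqrt (\<Sum>j<p. (v j)\<^sup>2)))"
proof -
  define T where "T = {j. j < p \<and> v j \<noteq> 0}"
  have T: "finite T" "T \<noteq> {}" "T \<subseteq> {..<p}" using assms(2) by (auto simp: T_def)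
  have "indep_vars (\<lambda>_. borel) (\<lambda>j \<omega>. v j * X i j \<omega>) T"
    using indep_vars_entry_blocks[of T "\<lambda>j. {Inl (i, j)}" "\<lambda>j h. v j * h (Inl (i, j))"] assms(1) T(3)
    by (auto simp: disjoint_family_on_def)
  moreover have "distributed M lborel (\<lambda>\<omega>. v j * X i j \<omega>) (normal_density 0 \<bar>v j\<bar>)" if "j \<in> T" for j
    using normal_density_affine[OF X_std_normal[OF assms(1), of j], where \<alpha>="v j" and \<beta>=0] that
    by (auto simp: T_def)
  ultimately have "distributed M lborel (\<lambda>\<omega>. \<Sum>j\<in>T. v j * X i j \<omega>)
      (normal_density 0 (sqrt (\<Sum>j\<in>T. \<bar>v j\<bar>\<^sup>2)))"
    using sum_indep_normal[OF T(1,2), of "\<lambda>j \<omega>. v j * X i j \<omega>" "\<lambda>j. \<bar>v j\<bar>" "\<lambda>_. 0"]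
    by (auto simp: T_def)
  moreover have "(\<Sum>j\<in>T. v j * X i j \<omega>) = linear_predictor v i \<omega>" for \<omega>
    unfolding linear_predictor_def by (rule sum.mono_neutral_cong_left) (auto simp: T_def)
  moreover have "(\<Sum>j\<in>T. \<bar>v j\<bar>\<^sup>2) = (\<Sum>j<p. (v j)\<^sup>2)"
    by (rule sum.mono_neutral_cong_left) (auto simp: T_def)
  ultimately show ?thesis by simp
qed

lemma indep_var_linear_predictor_noise:
  assumes "i < n"
  shows "indep_var borel (linear_predictor v i) borel (W i)"
proof -
  define Y where "Y = (\<lambda>k. case k of Inl (i, j) \<Rightarrow> X i j | Inr i \<Rightarrow> W i)"
  define A where "A = (Inl ` ({i} \<times> {..<p}) :: (nat \<times> nat + nat) set)"
  have "indep_var (PiM A (\<lambda>_. borel)) (\<lambda>\<omega>. \<lambda>k \<in> A. Y k \<omega>) (PiM {Inr i} (\<lambda>_. borel)) (\<lambda>\<omega>. \<lambda>k \<in> {Inr i}. Y k \<omega>)"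
    unfolding Y_def by (rule indep_var_restrict[OF indep_entries]) (use assms in \<open>auto simp: A_def\<close>)
  then have "indep_var borel ((\<lambda>h. \<Sum>j<p. h (Inl (i, j)) * v j) \<circ> (\<lambda>\<omega>. \<lambda>k \<in> A. Y k \<omega>))
      borel ((\<lambda>h. h (Inr i)) \<circ> (\<lambda>\<omega>. \<lambda>k \<in> {Inr i}. Y k \<omega>))"
    by (rule indep_var_compose) (auto simp: A_def intro!: borel_measurable_sum borel_measurable_times)
  moreover have "(\<lambda>h. \<Sum>j<p. h (Inl (i, j)) * v j) \<circ> (\<lambda>\<omega>. \<lambda>k \<in> A. Y k \<omega>) = linear_predictor v i"
    by (auto simp: A_def Y_def linear_predictor_def)
  ultimately show ?thesis by (simp add: Y_def comp_def)
qed

lemma indep_vars_rows: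
  assumes "\<And>i. i < n \<Longrightarrow> (\<lambda>(g, w). f i g w) \<in> borel_measurable (borel \<Otimes>\<^sub>M borel)"
  shows "indep_vars (\<lambda>_. borel) (\<lambda>i \<omega>. f i (linear_predictor v i \<omega>) (W i \<omega>)) {..<n}"
proof -
  define K where "K i = (Inl ` ({i} \<times> {..<p}) \<union> {Inr i} :: (nat \<times> nat + nat) set)" for i
  define \<Phi> where "\<Phi> i h = f i (\<Sum>j<p. h (Inl (i, j)) * v j) (h (Inr i))" for i h
  have "\<Phi> i \<in> borel_measurable (PiM (K i) (\<lambda>_. borel))" if "i < n" for i
  proof -
    have "(\<lambda>h. (\<Sum>j<p. h (Inl (i, j)) * v j, h (Inr i))) \<in> PiM (K i) (\<lambda>_. borel) \<rightarrow>\<^sub>M borel \<Otimes>\<^sub>M borel"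
      by (intro measurable_Pair borel_measurable_sum borel_measurable_times) (auto simp: K_def)
    from measurable_compose[OF this assms[OF that]] show ?thesis
      by (simp add: \<Phi>_def[abs_def])
  qed
  then have "indep_vars (\<lambda>_. borel)
      (\<lambda>i \<omega>. \<Phi> i (\<lambda>k \<in> K i. (case k of Inl (i, j) \<Rightarrow> X i j | Inr i \<Rightarrow> W i) \<omega>)) {..<n}"
    by (intro indep_vars_entry_blocks) (auto simp: K_def disjoint_family_on_def)
  then show ?thesis
    by (simp add: \<Phi>_def K_def linear_predictor_def)
qed

lemma emeasure_sum_shifted_square_diff_nonpos:
  "emeasure M {\<omega> \<in> space M. (\<Sum>i<n. (c i * linear_predictor v i \<omega> + W i \<omega>)\<^sup>2 - (W i \<omega>)\<^sup>2) \<le> 0}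
    \<le> ennreal (\<Prod>i<n. 1 / sqrt (1 + (c i)\<^sup>2 * (\<Sum>j<p. (v j)\<^sup>2) / 4))"
proof (cases "\<exists>j<p. v j \<noteq> 0")
  case False
  then show ?thesis by (simp add: emeasure_le_1)
next
  case True
  define K where "K = (\<Sum>j<p. (v j)\<^sup>2)"
  obtain j where "j < p" "v j \<noteq> 0" using True by blast
  then have "0 < K"
    unfolding K_def by (intro sum_pos2[where i=j]) auto
  have "emeasure M {\<omega> \<in> space M. (\<Sum>i<n. (c i * linear_predictor v i \<omega> + W i \<omega>)\<^sup>2 - (W i \<omega>)\<^sup>2) \<le> 0}
      \<le> (\<Prod>i<n. \<integral>\<^sup>+\<omega>. ennreal (exp (- (1 / 4) * ((c i * linear_predictor v i \<omega> + W i \<omega>)\<^sup>2 - (W i \<omega>)\<^sup>2))) \<partial>M)"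
    by (intro emeasure_sum_nonpos_le_prod indep_vars_rows) (simp_all, measurable)
  also have "\<dots> = (\<Prod>i<n. ennreal (1 / sqrt (1 + (c i)\<^sup>2 * K / 4)))"
  proof (rule prod.cong)
    fix i assume "i \<in> {..<n}"
    then have "i < n" by simp
    show "(\<integral>\<^sup>+\<omega>. ennreal (exp (- (1 / 4) * ((c i * linear_predictor v i \<omega> + W i \<omega>)\<^sup>2 - (W i \<omega>)\<^sup>2))) \<partial>M)
        = ennreal (1 / sqrt (1 + (c i)\<^sup>2 * K / 4))"
      using nn_integral_exp_shifted_square_diff[OF distributed_linear_predictor[OF \<open>i < n\<close> True] _
          W_std_normal[OF \<open>i < n\<close>] indep_var_linear_predictor_noise[OF \<open>i < n\<close>], where a="c i"]
        \<open>0 < K\<close>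
      by (simp add: K_def)
  qed simp
  also have "\<dots> = ennreal (\<Prod>i<n. 1 / sqrt (1 + (c i)\<^sup>2 * K / 4))"
    using \<open>0 < K\<close> by (intro prod_ennreal) simp
  finally show ?thesis by (simp add: K_def)
qed

end

lemma wres_resp_diff:
  assumes "\<sigma>1 \<noteq> 0" "\<sigma>2 \<noteq> 0"
  shows "wres n n1 \<sigma>1 \<sigma>2 p x (resp n1 \<sigma>1 \<sigma>2 p Sstar x w) S
       - wres n n1 \<sigma>1 \<sigma>2 p x (resp n1 \<sigma>1 \<sigma>2 p Sstar x w) Sstar
    = (\<Sum>i<n. (inverse (sig n1 \<sigma>1 \<sigma>2 i) * (\<Sum>j<p. x i j * (indicator Sstar j - indicator S j)) + w i)\<^sup>2
         - (w i)\<^sup>2)"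
proof -
  have sig_nz: "sig n1 \<sigma>1 \<sigma>2 i \<noteq> 0" for i
    using assms by (simp add: sig_def)
  have expand: "(inverse \<sigma> * (a + \<sigma> * w - b))\<^sup>2 - (inverse \<sigma> * (a + \<sigma> * w - a))\<^sup>2
      = (inverse \<sigma> * (a - b) + w)\<^sup>2 - w\<^sup>2" if "\<sigma> \<noteq> 0" for \<sigma> a b w :: real
    using that by (simp add: field_simps power2_eq_square)
  have inner: "(\<Sum>j<p. x i j * (indicator Sstar j - indicator S j))
      = (\<Sum>j<p. x i j * indicator Sstar j) - (\<Sum>j<p. x i j * indicator S j)" for i
    by (simp add: right_diff_distrib sum_subtractf)
  show ?thesis
    unfolding wres_def resp_def sum_subtractf[symmetric]
    by (intro sum.cong refl) (simp only: inner expand[OF sig_nz])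
qed

lemma sum_indicator_diff_square:
  assumes "finite U" "A \<subseteq> U" "B \<subseteq> U"
  shows "(\<Sum>j\<in>U. (indicator A j - indicator B j :: real)\<^sup>2) = real (card ((A - B) \<union> (B - A)))"
proof -
  have "(\<Sum>j\<in>U. (indicator A j - indicator B j :: real)\<^sup>2) = (\<Sum>j\<in>(A - B) \<union> (B - A). 1)"
    using assms by (intro sum.mono_neutral_cong_right) (auto split: split_indicator)
  then show ?thesis by simp
qed

lemma prod_sig:
  "(\<Prod>i<n1 + n2. f (sig n1 \<sigma>1 \<sigma>2 i)) = f \<sigma>1 ^ n1 * f \<sigma>2 ^ n2"
  by (simp add: lessThan_atLeast0 prod.atLeastLessThan_concat[symmetric, of 0 n1] sig_def)

lemma inverse_sqrt_le_powr:
  assumes "\<sigma> \<noteq> 0" "2 * d \<le> K" "0 \<le> d"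
  shows "1 / sqrt (1 + (inverse \<sigma>)\<^sup>2 * K / 4) \<le> (1 + d / (2 * \<sigma>\<^sup>2)) powr (- 1 / 2)"
proof -
  have "d / (2 * \<sigma>\<^sup>2) = 2 * d / (4 * \<sigma>\<^sup>2)" by simp
  also have "\<dots> \<le> K / (4 * \<sigma>\<^sup>2)" using assms by (intro divide_right_mono) auto
  also have "\<dots> = (inverse \<sigma>)\<^sup>2 * K / 4" by (simp add: field_simps)
  finally have "d / (2 * \<sigma>\<^sup>2) \<le> (inverse \<sigma>)\<^sup>2 * K / 4" .
  moreover have "0 \<le> d / (2 * \<sigma>\<^sup>2)" using assms by simp
  ultimately have "1 / sqrt (1 + (inverse \<sigma>)\<^sup>2 * K / 4) \<le> 1 / sqrt (1 + d / (2 * \<sigma>\<^sup>2))"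
    by (intro divide_left_mono) (auto intro: add_pos_nonneg)
  also have "\<dots> = (1 + d / (2 * \<sigma>\<^sup>2)) powr (- 1 / 2)"
    using \<open>0 \<le> d / (2 * \<sigma>\<^sup>2)\<close> by (simp add: powr_minus_divide powr_half_sqrt[symmetric])
  finally show ?thesis .
qed

lemma prod_sig_inverse_sqrt_le:
  assumes "\<sigma>1 \<noteq> 0" "\<sigma>2 \<noteq> 0" "2 * d \<le> K" "0 \<le> d"
  shows "(\<Prod>i<n1 + n2. 1 / sqrt (1 + (inverse (sig n1 \<sigma>1 \<sigma>2 i))\<^sup>2 * K / 4))
    \<le> (1 + d / (2 * \<sigma>1\<^sup>2)) powr (- real n1 / 2) * (1 + d / (2 * \<sigma>2\<^sup>2)) powr (- real n2 / 2)"
proof -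
  have pos: "0 < 1 + d / (2 * \<sigma>\<^sup>2)" for \<sigma> :: real
    using assms by (simp add: add_pos_nonneg)
  have "(\<Prod>i<n1 + n2. 1 / sqrt (1 + (inverse (sig n1 \<sigma>1 \<sigma>2 i))\<^sup>2 * K / 4))
      \<le> ((1 + d / (2 * \<sigma>1\<^sup>2)) powr (- 1 / 2)) ^ n1 * ((1 + d / (2 * \<sigma>2\<^sup>2)) powr (- 1 / 2)) ^ n2"
    unfolding prod_sig[of "\<lambda>\<sigma>. 1 / sqrt (1 + (inverse \<sigma>)\<^sup>2 * K / 4)"] using assms
    by (intro mult_mono power_mono inverse_sqrt_le_powr) auto
  also have "\<dots> = (1 + d / (2 * \<sigma>1\<^sup>2)) powr (- real n1 / 2) * (1 + d / (2 * \<sigma>2\<^sup>2)) powr (- real n2 / 2)"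
    using pos[of \<sigma>1] pos[of \<sigma>2] by (simp add: powr_power)
  finally show ?thesis .
qed

theorem proposition3:
  fixes M :: "'a measure"
    and X :: "nat \<Rightarrow> nat \<Rightarrow> 'a \<Rightarrow> real"
    and W :: "nat \<Rightarrow> 'a \<Rightarrow> real"
    and n1 n2 n p s :: nat and \<sigma>1 \<sigma>2 \<delta> :: real
    and Sstar S :: "nat set"
  assumes "prob_space M"
    and "n1 \<ge> 1" "n2 \<ge> 1" "n = n1 + n2"
    and "0 < \<sigma>1\<^sup>2" "\<sigma>1\<^sup>2 < \<sigma>2\<^sup>2"
    and "prob_space.indep_vars M (\<lambda>_. borel)
           (\<lambda>k. case k of Inl (i, j) \<Rightarrow> X i j | Inr i \<Rightarrow> W i)
           (Inl ` ({..<n} \<times> {..<p}) \<union> Inr ` {..<n})"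
    and "\<And>i j. i < n \<Longrightarrow> j < p \<Longrightarrow> distributed M lborel (X i j) std_normal_density"
    and "\<And>i. i < n \<Longrightarrow> distributed M lborel (W i) std_normal_density"
    and "Sstar \<subseteq> {..<p}" "card Sstar = s"
    and "S \<subseteq> {..<p}" "card S = s"
    and "0 < \<delta>" "\<delta> < 1"
    and "real (card ((S - Sstar) \<union> (Sstar - S))) / 2 \<ge> \<delta> * real s"
  shows "prob_space.prob M
           {\<omega> \<in> space M.
              (let x = (\<lambda>i j. X i j \<omega>);
                   y = resp n1 \<sigma>1 \<sigma>2 p Sstar x (\<lambda>i. W i \<omega>)
               in wres n n1 \<sigma>1 \<sigma>2 p x y S - wres n n1 \<sigma>1 \<sigma>2 p x y Sstar) \<le> 0}
         \<le> (1 + \<delta> * real s / (2 * \<sigma>1\<^sup>2)) powr (- real n1 / 2)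
           * (1 + \<delta> * real s / (2 * \<sigma>2\<^sup>2)) powr (- real n2 / 2)"
proof -
  interpret gaussian_design M X W n p
    using assms(1,7-9) by (simp add: gaussian_design_def gaussian_design_axioms_def)
  define v :: "nat \<Rightarrow> real" where "v j = indicator Sstar j - indicator S j" for j
  have \<sigma>_nz: "\<sigma>1 \<noteq> 0" "\<sigma>2 \<noteq> 0" using assms(5,6) by auto
  have "(\<Sum>j<p. (v j)\<^sup>2) = real (card ((S - Sstar) \<union> (Sstar - S)))"
    unfolding v_def using assms(10,12) by (subst sum_indicator_diff_square) (auto simp: Un_commute)
  then have separation: "2 * (\<delta> * real s) \<le> (\<Sum>j<p. (v j)\<^sup>2)"
    using assms(16) by simp
  have "emeasure M {\<omega> \<in> space M. (\<Sum>i<n. (inverse (sig n1 \<sigma>1 \<sigma>2 i) * linear_predictor v i \<omega>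
      + W i \<omega>)\<^sup>2 - (W i \<omega>)\<^sup>2) \<le> 0}
    \<le> ennreal (\<Prod>i<n1 + n2. 1 / sqrt (1 + (inverse (sig n1 \<sigma>1 \<sigma>2 i))\<^sup>2 * (\<Sum>j<p. (v j)\<^sup>2) / 4))"
    using emeasure_sum_shifted_square_diff_nonpos assms(4) by simp
  also have "\<dots> \<le> ennreal ((1 + \<delta> * real s / (2 * \<sigma>1\<^sup>2)) powr (- real n1 / 2)
      * (1 + \<delta> * real s / (2 * \<sigma>2\<^sup>2)) powr (- real n2 / 2))"
    using prod_sig_inverse_sqrt_le[OF \<sigma>_nz separation] assms(14)
    by (intro ennreal_leI) simp
  finally show ?thesis
    by (simp add: wres_resp_diff[OF \<sigma>_nz] linear_predictor_def v_def emeasure_eq_measure)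
qed

end
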